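(* Let $k$ be a positive integer and let $a_1\ge a_2\ge\cdots\ge a_{k+1}$ and $b_1\ge b_2\ge\cdots\ge b_{k+1}$ be real numbers in $[a,b]$ with $a_1\ge b_1$ and $(-1)^k a_{k+1}\le(-1)^k b_{k+1}$, such that $\sum_{i=1}^{k+1}a_i^j=\sum_{i=1}^{k+1}b_i^j$ for all integers $1\le j<k$. Then \[ \sum_{i=1}^{k+1}f(a_i)\ge\sum_{i=1}^{k+1}f(b_i) \] for every $k$ times differentiable $f:[a,b]\to\mathbb{R}$ with $f^{(k)}\ge 0$. *)

theory Defs
  imports Complex_Main
begin

definition k_times_differentiable_on ::
  "nat \<Rightarrow> (nat \<Rightarrow> real \<Rightarrow> real) \<Rightarrow> real set \<Rightarrow> bool" where
  "k_times_differentiable_on k D S \<longleftrightarrow>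
     (\<forall>m<k. \<forall>x\<in>S. (D m has_real_derivative D (Suc m) x) (at x within S))"

end

theory Submission
  imports Defs "HOL-Analysis.Analysis" "HOL-Computational_Algebra.Polynomial"
begin

text \<open>
  Write
  \<open>balance(t) = #{l. t \<le> a\<^sub>l} - #{l. t \<le> b\<^sub>l}\<close>; then
  \<open>\<Sum> f(a\<^sub>l) - f(b\<^sub>l) = \<integral> f' \<cdot> balance\<close> over \<open>[lo, hi]\<close>, and the equal power sums say that
  every polynomial of degree \<open>< k - 1\<close> integrates to zero against the balance.

  The proof has three ingredients, developed in this order:
  \<^item> interpolation: if \<open>f\<^sup>(\<^sup>k\<^sup>) \<ge> 0\<close> and \<open>q\<close> interpolates \<open>f'\<close> at \<open>k - 1\<close> nodes \<open>C\<close>, then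
    \<open>f' - q\<close> has the sign of the node polynomial \<open>\<omega>\<^sub>C\<close> (generalised Rolle theorem);
  \<^item> the integral representation and the vanishing moments of the balance;
  \<^item> a combinatorial sweep over the pairs \<open>(a\<^sub>l, b\<^sub>l)\<close> producing at most \<open>k - 1\<close> nodes \<open>C\<close>
    such that the balance has the sign of \<open>\<omega>\<^sub>C\<close> everywhere; the end conditions on
    \<open>a\<^sub>1, b\<^sub>1\<close> and \<open>a\<^sub>k\<^sub>+\<^sub>1, b\<^sub>k\<^sub>+\<^sub>1\<close> keep the node count below \<open>k\<close>.
  With exactly \<open>k - 1\<close> nodes, \<open>\<Sum> f(a\<^sub>l) - f(b\<^sub>l) = \<integral> (f' - q) \<cdot> balance \<ge> 0\<close>.  With fewer
  nodes, \<open>\<omega>\<^sub>C \<cdot> balance\<close> is nonnegative with integral zero, so the balance vanishes almost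
  everywhere and both sums are equal.
\<close>

lemma rolle_between_zeros:
  fixes F F' :: "real \<Rightarrow> real"
  assumes der: "\<forall>x\<in>{lo..hi}. (F has_real_derivative F' x) (at x within {lo..hi})"
    and uv: "u < v" "u \<in> {lo..hi}" "v \<in> {lo..hi}" and zero: "F u = 0" "F v = 0"
  shows "\<exists>z. u < z \<and> z < v \<and> F' z = 0"
proof -
  have interior: "(F has_real_derivative F' x) (at x)" if "u < x" "x < v" for x
  proof -
    have "lo < x" "x < hi" "x \<in> {lo..hi}" using uv that by auto
    then show ?thesis using der at_within_Icc_at[of lo x hi] by metis
  qed
  have "continuous_on {lo..hi} F"
    unfolding continuous_on_eq_continuous_within using der DERIV_continuous by blast
  then have "continuous_on {u..v} F"
    by (rule continuous_on_subset) (use uv in auto)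
  then obtain z where z: "u < z" "z < v" "DERIV F z :> 0"
    using Rolle[OF uv(1)] zero interior real_differentiable_def by metis
  then show ?thesis using DERIV_unique interior by blast
qed

lemma higher_rolle:
  fixes Phi :: "nat \<Rightarrow> real \<Rightarrow> real"
  assumes "\<forall>m<n. \<forall>x\<in>{lo..hi}. (Phi m has_real_derivative Phi (Suc m) x) (at x within {lo..hi})"
    and "finite Z" "Z \<subseteq> {lo..hi}" "card Z = Suc n" "\<forall>z\<in>Z. Phi 0 z = 0"
  shows "\<exists>\<xi>\<in>{lo..hi}. Phi n \<xi> = 0"
  using assms
proof (induction n arbitrary: Phi Z)
  case 0
  then show ?case by (metis card_0_eq nat.distinct(1) subsetD ex_in_conv)
next
  case (Suc n)
  text \<open>List the zeros increasingly and pick a zero of \<open>\<Phi>\<^sub>1\<close> in each gap.\<close>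
  define xs where "xs = sorted_list_of_set Z"
  have sorted: "sorted_wrt (<) xs" and len: "length xs = Suc (Suc n)" and set: "set xs = Z"
    using Suc.prems(2,4) by (simp_all add: xs_def)
  have lt: "xs ! i < xs ! j" if "i < j" "j < Suc (Suc n)" for i j
    using sorted_wrt_nth_less[OF sorted that(1)] that(2) len by simp
  have inZ: "xs ! i \<in> Z" "xs ! i \<in> {lo..hi}" if "i < Suc (Suc n)" for i
    using nth_mem[of i xs] that len set Suc.prems(3) by auto
  have "\<exists>z. xs ! i < z \<and> z < xs ! Suc i \<and> Phi 1 z = 0" if i: "i < Suc n" for i
    using Suc.prems(1,5) inZ[of i] inZ[of "Suc i"] i
    by (intro rolle_between_zeros[of lo hi "Phi 0"]) (auto simp: lt)
  then obtain \<xi> where xi: "\<And>i. i < Suc n \<Longrightarrow> xs ! i < \<xi> i \<and> \<xi> i < xs ! Suc i \<and> Phi 1 (\<xi> i) = 0"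
    by metis
  have mono: "\<xi> i < \<xi> j" if "i < j" "j < Suc n" for i j
  proof -
    have "\<xi> i < xs ! Suc i" using xi that by auto
    also have "xs ! Suc i \<le> xs ! j" using lt[of "Suc i" j] that by (cases "Suc i = j") auto
    also have "xs ! j < \<xi> j" using xi that by auto
    finally show ?thesis .
  qed
  have "inj_on \<xi> {..<Suc n}"
    by (rule inj_onI) (metis lessThan_iff linorder_neqE_nat mono order_less_irrefl)
  then have card: "card (\<xi> ` {..<Suc n}) = Suc n" by (simp add: card_image)
  have "\<xi> ` {..<Suc n} \<subseteq> {lo..hi}"
  proof
    fix y assume "y \<in> \<xi> ` {..<Suc n}"
    then obtain i where "i < Suc n" "y = \<xi> i" by auto
    then show "y \<in> {lo..hi}" using xi[of i] inZ[of i] inZ[of "Suc i"] by auto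
  qed
  then have "\<exists>\<xi>'\<in>{lo..hi}. Phi (Suc n) \<xi>' = 0"
    using Suc.IH[of "\<lambda>m. Phi (Suc m)" "\<xi> ` {..<Suc n}"] Suc.prems(1) card xi by auto
  then show ?case .
qed

lemma higher_pderiv_of_degree_le:
  fixes p :: "real poly"
  assumes "degree p \<le> n"
  shows "(pderiv ^^ n) p = [:fact n * coeff p n:]"
  using assms
proof (induction n arbitrary: p)
  case 0
  then show ?case by (simp add: degree_0_id)
next
  case (Suc n)
  have "(pderiv ^^ Suc n) p = (pderiv ^^ n) (pderiv p)"
    by (simp only: funpow_Suc_right o_apply)
  also have "\<dots> = [:fact n * coeff (pderiv p) n:]"
    using Suc by (intro Suc.IH) (simp add: degree_pderiv)
  finally show ?case by (simp add: coeff_pderiv algebra_simps)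
qed

definition node_poly :: "real set \<Rightarrow> real poly" where
  "node_poly C = (\<Prod>c\<in>C. [:-c, 1:])"

lemma node_poly_empty [simp]: "node_poly {} = 1"
  by (simp add: node_poly_def)

lemma poly_node_poly: "poly (node_poly C) t = (\<Prod>c\<in>C. t - c)"
  by (simp add: node_poly_def poly_prod)

lemma node_poly_insert:
  "finite C \<Longrightarrow> c \<notin> C \<Longrightarrow> poly (node_poly (insert c C)) t = (t - c) * poly (node_poly C) t"
  by (simp add: poly_node_poly)

lemma node_poly_eq_0_iff: "finite C \<Longrightarrow> poly (node_poly C) t = 0 \<longleftrightarrow> t \<in> C"
  by (simp add: poly_node_poly)

lemma degree_node_poly: "finite C \<Longrightarrow> degree (node_poly C) = card C"
  unfolding node_poly_def by (subst degree_prod_sum_eq) simp_all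

lemma lead_coeff_node_poly: "finite C \<Longrightarrow> coeff (node_poly C) (card C) = 1"
  using lead_coeff_prod[of "\<lambda>c. [:-c, 1:: real:]" C] degree_node_poly[of C]
  by (simp add: node_poly_def)

text \<open>Polynomial interpolation (in Newton form): any function can be interpolated on a finite
  node set \<open>C\<close> by a polynomial with no coefficients beyond degree \<open>card C - 1\<close>.\<close>
lemma interpolating_poly:
  fixes g :: "real \<Rightarrow> real"
  assumes "finite C"
  shows "\<exists>q. (\<forall>j. coeff q j \<noteq> 0 \<longrightarrow> j < card C) \<and> (\<forall>c\<in>C. poly q c = g c)"
  using assms
proof (induction C rule: finite_induct)
  case empty
  show ?case by (intro exI[of _ 0]) simp
next
  case (insert c C)
  then obtain q where q: "\<forall>j. coeff q j \<noteq> 0 \<longrightarrow> j < card C" "\<forall>c\<in>C. poly q c = g c"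
    by blast
  define q' where "q' = q + smult ((g c - poly q c) / poly (node_poly C) c) (node_poly C)"
  have "coeff q' j \<noteq> 0 \<Longrightarrow> j < card (insert c C)" for j
    using q(1) coeff_eq_0[of "node_poly C" j] insert.hyps
    by (force simp: q'_def degree_node_poly)
  moreover have "poly q' x = g x" if "x \<in> insert c C" for x
    using that q(2) insert.hyps by (auto simp: q'_def node_poly_eq_0_iff)
  ultimately show ?case by blast
qed

text \<open>At \<open>x \<notin> C\<close> choose \<open>\<lambda>\<close> so that
  \<open>D\<^sub>0 - q - \<lambda> \<omega>\<^sub>C\<close> vanishes on \<open>C \<union> {x}\<close>; its \<open>n\<close>-th derivative \<open>D\<^sub>n - \<lambda> n!\<close> then has a
  zero, whence \<open>\<lambda> \<ge> 0\<close>.\<close>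
lemma interpolation_remainder_sign:
  fixes D :: "nat \<Rightarrow> real \<Rightarrow> real" and q :: "real poly"
  assumes der: "\<forall>m<n. \<forall>x\<in>{lo..hi}. (D m has_real_derivative D (Suc m) x) (at x within {lo..hi})"
    and pos: "\<forall>x\<in>{lo..hi}. D n x \<ge> 0"
    and C: "finite C" "C \<subseteq> {lo..hi}" "card C = n"
    and q: "\<forall>j. coeff q j \<noteq> 0 \<longrightarrow> j < n" "\<forall>c\<in>C. poly q c = D 0 c"
    and x: "x \<in> {lo..hi}"
  shows "(D 0 x - poly q x) * poly (node_poly C) x \<ge> 0"
proof (cases "x \<in> C")
  case True
  then have "poly (node_poly C) x = 0" using C by (simp add: node_poly_eq_0_iff)
  then show ?thesis by simp
next
  case False
  let ?W = "node_poly C"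
  have W: "poly ?W x \<noteq> 0" using False C by (simp add: node_poly_eq_0_iff)
  have "degree q \<le> n"
    using q(1) by (metis degree_0 le0 leading_coeff_0_iff less_imp_le)
  moreover have "coeff q n = 0" using q(1) by blast
  ultimately have dq: "(pderiv ^^ n) q = 0" by (simp add: higher_pderiv_of_degree_le)
  have dW: "(pderiv ^^ n) ?W = [:fact n:]"
    using C lead_coeff_node_poly[of C] by (simp add: higher_pderiv_of_degree_le degree_node_poly)
  define lam where "lam = (D 0 x - poly q x) / poly ?W x"
  define Phi where "Phi j t = D j t - poly ((pderiv ^^ j) q) t - lam * poly ((pderiv ^^ j) ?W) t"
    for j t
  have "\<exists>\<xi>\<in>{lo..hi}. Phi n \<xi> = 0"
  proof (rule higher_rolle)
    show "\<forall>m<n. \<forall>t\<in>{lo..hi}. (Phi m has_real_derivative Phi (Suc m) t) (at t within {lo..hi})"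
      unfolding Phi_def using der
      by (auto intro!: derivative_eq_intros simp: has_field_derivative_at_within)
    show "finite (insert x C)" "insert x C \<subseteq> {lo..hi}" "card (insert x C) = Suc n"
      using C x False by auto
    show "\<forall>z\<in>insert x C. Phi 0 z = 0"
      using W q(2) C by (auto simp: Phi_def lam_def node_poly_eq_0_iff)
  qed
  then obtain \<xi> where "\<xi> \<in> {lo..hi}" "D n \<xi> = lam * fact n"
    by (auto simp: Phi_def dW dq)
  then have "lam \<ge> 0" using pos by (metis fact_gt_zero zero_le_mult_iff not_le)
  moreover have "D 0 x - poly q x = lam * poly ?W x" using W by (simp add: lam_def)
  ultimately show ?thesis by (simp add: mult.assoc)
qed

text \<open>\<open>step_diff x y\<close> is the difference of the indicators of \<open>(-\<infinity>, x]\<close> and \<open>(-\<infinity>, y]\<close>,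
  and \<open>balance a b n t = #{l \<le> n. t \<le> a l} - #{l \<le> n. t \<le> b l}\<close> the resulting step function.
  Since \<open>U x - U lo = \<integral>\<^sub>l\<^sub>o\<^sup>x u\<close>, differences \<open>\<Sum> U(a\<^sub>l) - U(b\<^sub>l)\<close> are integrals of \<open>u\<close> against it.\<close>
definition step_diff :: "real \<Rightarrow> real \<Rightarrow> real \<Rightarrow> real" where
  "step_diff x y t = (if t \<le> x then 1 else 0) - (if t \<le> y then 1 else 0)"

definition balance :: "(nat \<Rightarrow> real) \<Rightarrow> (nat \<Rightarrow> real) \<Rightarrow> nat \<Rightarrow> real \<Rightarrow> real" where
  "balance a b n t = (\<Sum>l=1..n. step_diff (a l) (b l) t)"

lemma balance_0 [simp]: "balance a b 0 t = 0"
  by (simp add: balance_def)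

lemma balance_Suc:
  "balance a b (Suc n) t = balance a b n t + step_diff (a (Suc n)) (b (Suc n)) t"
  by (simp add: balance_def)

lemma has_integral_below:
  fixes U u :: "real \<Rightarrow> real"
  assumes der: "\<forall>y\<in>{lo..hi}. (U has_real_derivative u y) (at y within {lo..hi})"
    and x: "x \<in> {lo..hi}"
  shows "((\<lambda>t. u t * (if t \<le> x then 1 else 0)) has_integral U x - U lo) {lo..hi}"
proof -
  have "(u has_integral U x - U lo) {lo..x}"
  proof (rule fundamental_theorem_of_calculus)
    show "lo \<le> x" using x by simp
    fix y assume y: "y \<in> {lo..x}"
    then have "(U has_real_derivative u y) (at y within {lo..hi})" using der x by auto
    then have "(U has_real_derivative u y) (at y within {lo..x})"
      by (rule has_field_derivative_subset) (use x in auto)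
    then show "(U has_vector_derivative u y) (at y within {lo..x})"
      by (simp add: has_real_derivative_iff_has_vector_derivative)
  qed
  moreover have "{..x} \<inter> {lo..hi} = {lo..x}" using x by auto
  ultimately have "((\<lambda>t. if t \<in> {..x} then u t else 0) has_integral U x - U lo) {lo..hi}"
    by (simp only: has_integral_restrict_Int)
  then show ?thesis by (rule has_integral_eq[rotated]) simp
qed

lemma has_integral_balance:
  fixes U u :: "real \<Rightarrow> real" and a b :: "nat \<Rightarrow> real"
  assumes der: "\<forall>x\<in>{lo..hi}. (U has_real_derivative u x) (at x within {lo..hi})"
    and ina: "\<forall>l\<in>{1..n}. a l \<in> {lo..hi}" and inb: "\<forall>l\<in>{1..n}. b l \<in> {lo..hi}"
  shows "((\<lambda>t. u t * balance a b n t) has_integral (\<Sum>l=1..n. U (a l) - U (b l))) {lo..hi}"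
proof -
  have "((\<lambda>t. \<Sum>l=1..n. u t * (if t \<le> a l then 1 else 0) - u t * (if t \<le> b l then 1 else 0))
      has_integral (\<Sum>l=1..n. (U (a l) - U lo) - (U (b l) - U lo))) {lo..hi}"
    using ina inb by (intro has_integral_sum has_integral_diff has_integral_below[OF der]) auto
  then show ?thesis
    by (simp add: balance_def step_diff_def sum_distrib_left right_diff_distrib)
qed

definition poly_antideriv :: "real poly \<Rightarrow> real \<Rightarrow> real" where
  "poly_antideriv p x = (\<Sum>j\<le>degree p. coeff p j * x ^ Suc j / real (Suc j))"

lemma poly_antideriv_deriv: "(poly_antideriv p has_real_derivative poly p x) (at x within S)"
proof -
  have "(poly_antideriv p has_real_derivative (\<Sum>j\<le>degree p. coeff p j * x ^ j)) (at x within S)"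
    unfolding poly_antideriv_def[abs_def]
    by (rule derivative_eq_intros refl | simp)+ (simp add: mult.commute)
  then show ?thesis by (simp add: poly_altdef)
qed

lemma has_integral_poly_balance:
  fixes p :: "real poly" and a b :: "nat \<Rightarrow> real"
  assumes power_sums: "\<forall>j\<in>{1..<k}. (\<Sum>i=1..n. a i ^ j) = (\<Sum>i=1..n. b i ^ j)"
    and low_degree: "\<forall>j. coeff p j \<noteq> 0 \<longrightarrow> j + 1 < k"
    and ina: "\<forall>l\<in>{1..n}. a l \<in> {lo..hi}" and inb: "\<forall>l\<in>{1..n}. b l \<in> {lo..hi}"
  shows "((\<lambda>t. poly p t * balance a b n t) has_integral 0) {lo..hi}"
proof -
  have moment: "coeff p j / real (Suc j) * ((\<Sum>l=1..n. a l ^ Suc j) - (\<Sum>l=1..n. b l ^ Suc j)) = 0"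
    for j
    using power_sums low_degree by (cases "coeff p j = 0") (auto simp del: power_Suc)
  have "(\<Sum>l=1..n. poly_antideriv p (a l) - poly_antideriv p (b l))
      = (\<Sum>j\<le>degree p. coeff p j / real (Suc j) * ((\<Sum>l=1..n. a l ^ Suc j) - (\<Sum>l=1..n. b l ^ Suc j)))"
    unfolding poly_antideriv_def sum_subtractf[symmetric] sum_distrib_left
    by (subst sum.swap) (simp add: algebra_simps)
  also have "\<dots> = 0" by (rule sum.neutral) (use moment in blast)
  finally show ?thesis
    using has_integral_balance[OF _ ina inb, of "poly_antideriv p"] poly_antideriv_deriv by simp
qed

lemma nonneg_has_integral_0_negligible:
  fixes g :: "'a::euclidean_space \<Rightarrow> real"
  assumes int: "(g has_integral 0) S" and nonneg: "\<And>x. x \<in> S \<Longrightarrow> 0 \<le> g x"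
  shows "negligible {x\<in>S. g x \<noteq> 0}"
proof -
  have af: "g absolutely_integrable_on S"
    using int nonneg by (intro nonnegative_absolutely_integrable_1) blast+
  have "set_lebesgue_integral lebesgue S g = 0"
    using set_lebesgue_integral_eq_integral(2)[OF af] int by (simp add: integral_unique)
  then have "AE x in lebesgue. indicator S x *\<^sub>R g x = 0"
    unfolding set_lebesgue_integral_def
    by (subst (asm) integral_nonneg_eq_0_iff_AE)
      (use af nonneg in \<open>auto simp: set_integrable_def indicator_def\<close>)
  then obtain N where "negligible N" "{x. indicator S x *\<^sub>R g x \<noteq> 0} \<subseteq> N"
    unfolding eventually_ae_filter_negligible by blast
  moreover have "{x\<in>S. g x \<noteq> 0} \<subseteq> {x. indicator S x *\<^sub>R g x \<noteq> 0}"
    by (auto simp: indicator_def)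
  ultimately show ?thesis using negligible_subset by blast
qed

lemma step_diff_eq_0: "x = y \<or> t \<le> min x y \<or> max x y < t \<Longrightarrow> step_diff x y t = 0"
  by (auto simp: step_diff_def)

lemma step_diff_parity:
  assumes "x \<noteq> y" "y < x \<longleftrightarrow> even m"
  shows "(-1) ^ m * step_diff x y t \<ge> 0"
  using assms by (cases "even m") (auto simp: step_diff_def)

lemma node_poly_sign_below:
  assumes "finite C" "\<forall>c\<in>C. t < c"
  shows "(-1) ^ card C * poly (node_poly C) t > 0"
  using assms
proof (induction C rule: finite_induct)
  case (insert c C)
  then have "(-1) ^ card C * poly (node_poly C) t * (c - t) > 0" by simp
  then show ?case using insert.hyps by (simp add: node_poly_insert algebra_simps)
qed simp

lemma step_diff_node_sign:
  assumes C: "finite C" "\<forall>c\<in>C. max x y \<le> c" and xy: "x \<noteq> y" "y < x \<longleftrightarrow> even (card C)"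
  shows "step_diff x y t * poly (node_poly C) t \<ge> 0"
proof (cases "step_diff x y t = 0 \<or> t \<in> C")
  case True
  then have "step_diff x y t = 0 \<or> poly (node_poly C) t = 0"
    using C(1) node_poly_eq_0_iff by blast
  then show ?thesis by auto
next
  case False
  then have "\<not> max x y < t" "t \<notin> C" using step_diff_eq_0[of x y t] by blast+
  then have "\<forall>c\<in>C. t < c" using C(2) by (metis not_less order.strict_trans1 order_le_less)
  then have "(-1) ^ card C * poly (node_poly C) t > 0" using node_poly_sign_below C(1) by blast
  moreover have "(-1) ^ card C * step_diff x y t \<ge> 0" using step_diff_parity xy by blast
  ultimately have "((-1) ^ card C * step_diff x y t) * ((-1) ^ card C * poly (node_poly C) t) \<ge> 0"
    by simp
  then show ?thesis by (simp add: algebra_simps flip: power_mult_distrib)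
qed

lemma balance_vanishes_below:
  assumes mono: "antimono_on {1..i} a" "antimono_on {1..i} b"
    and p: "1 \<le> p" "p \<le> i" and eq: "\<forall>l\<in>{p<..i}. a l = b l" and t: "t \<le> min (a p) (b p)"
  shows "balance a b i t = 0"
  unfolding balance_def
proof (rule sum.neutral, rule ballI)
  fix l assume l: "l \<in> {1..i}"
  show "step_diff (a l) (b l) t = 0"
  proof (cases "l \<le> p")
    case True
    moreover have "l \<in> {1..i}" "p \<in> {1..i}" using l p by auto
    ultimately have "a p \<le> a l" "b p \<le> b l"
      using monotone_onD[OF mono(1)] monotone_onD[OF mono(2)] by blast+
    then show ?thesis using t by (intro step_diff_eq_0) simp
  next
    case False
    then show ?thesis using eq l by (intro step_diff_eq_0) auto
  qed
qed

lemma card_diff_indices_Suc: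
  "card {l\<in>{1..Suc i}. a l \<noteq> b l}
     = card {l\<in>{1..i}. a l \<noteq> b l} + (if a (Suc i) \<noteq> b (Suc i) then 1 else 0)"
proof (cases "a (Suc i) = b (Suc i)")
  case True
  then have "{l\<in>{1..Suc i}. a l \<noteq> b l} = {l\<in>{1..i}. a l \<noteq> b l}" by (auto simp: le_Suc_eq)
  then show ?thesis using True by simp
next
  case False
  then have "{l\<in>{1..Suc i}. a l \<noteq> b l} = insert (Suc i) {l\<in>{1..i}. a l \<noteq> b l}"
    by (auto simp: le_Suc_eq)
  then show ?thesis using False by simp
qed

text \<open>Invariant of the sweep over \<open>l = 1, \<dots>, i\<close> that builds the node set \<open>C\<close>: \<open>p\<close> is the last
  index \<open>\<le> i\<close> with \<open>a\<^sub>p \<noteq> b\<^sub>p\<close> (or \<open>0\<close>), the balance has the sign of \<open>\<omega>\<^sub>C\<close>, all nodes lie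
  above \<open>max a\<^sub>p b\<^sub>p\<close>, the last nonzero step is oriented according to the parity of \<open>card C\<close>,
  and every node is paid for by a distinct unequal pair (one more if \<open>b\<^sub>1 < a\<^sub>1\<close>).\<close>
definition sign_pattern :: "(nat \<Rightarrow> real) \<Rightarrow> (nat \<Rightarrow> real) \<Rightarrow> nat \<Rightarrow> real set \<Rightarrow> nat \<Rightarrow> bool"
  where "sign_pattern a b i C p \<longleftrightarrow>
    finite C \<and> C \<subseteq> (\<lambda>l. max (a l) (b l)) ` {1..i} \<and> p \<le> i \<and>
    (\<forall>t. balance a b i t * poly (node_poly C) t \<ge> 0) \<and>
    (p = 0 \<longrightarrow> C = {} \<and> (\<forall>l\<in>{1..i}. a l = b l)) \<and>
    (0 < p \<longrightarrow> a p \<noteq> b p \<and> (\<forall>l\<in>{p<..i}. a l = b l) \<and> (\<forall>c\<in>C. max (a p) (b p) \<le> c) \<and>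
       (b p < a p \<longleftrightarrow> even (card C))) \<and>
    card C + (if 0 < i \<and> b 1 < a 1 then 1 else 0) \<le> card {l\<in>{1..i}. a l \<noteq> b l}"

lemma sign_pattern_step_equal:
  assumes inv: "sign_pattern a b i C p" and eq: "a (Suc i) = b (Suc i)"
  shows "sign_pattern a b (Suc i) C p"
  unfolding sign_pattern_def
proof (intro conjI)
  show "finite C" "p \<le> Suc i" using inv by (auto simp: sign_pattern_def)
  show "C \<subseteq> (\<lambda>l. max (a l) (b l)) ` {1..Suc i}"
    using inv by (force simp: sign_pattern_def)
  show "\<forall>t. balance a b (Suc i) t * poly (node_poly C) t \<ge> 0"
    using inv eq by (simp add: sign_pattern_def balance_Suc step_diff_eq_0)
  show "p = 0 \<longrightarrow> C = {} \<and> (\<forall>l\<in>{1..Suc i}. a l = b l)"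
    using inv eq by (auto simp: sign_pattern_def le_Suc_eq)
  show "0 < p \<longrightarrow> a p \<noteq> b p \<and> (\<forall>l\<in>{p<..Suc i}. a l = b l) \<and> (\<forall>c\<in>C. max (a p) (b p) \<le> c) \<and>
       (b p < a p \<longleftrightarrow> even (card C))"
    using inv eq by (auto simp: sign_pattern_def le_Suc_eq)
  have "(if 0 < Suc i \<and> b 1 < a 1 then 1 else 0) \<le> (if 0 < i \<and> b 1 < a 1 then 1 else 0 :: nat)"
    using eq by (cases i) auto
  moreover have "card C + (if 0 < i \<and> b 1 < a 1 then 1 else 0) \<le> card {l\<in>{1..i}. a l \<noteq> b l}"
    using inv by (simp add: sign_pattern_def)
  moreover have "card {l\<in>{1..Suc i}. a l \<noteq> b l} = card {l\<in>{1..i}. a l \<noteq> b l}"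
    using card_diff_indices_Suc[of i a b] eq by simp
  ultimately show "card C + (if 0 < Suc i \<and> b 1 < a 1 then 1 else 0) \<le> card {l\<in>{1..Suc i}. a l \<noteq> b l}"
    by linarith
qed

text \<open>The first unequal pair starts the pattern: no node if \<open>b\<^sub>l < a\<^sub>l\<close>, else one node at \<open>b\<^sub>l\<close>
  (which cannot happen for \<open>l = 1\<close> since \<open>b\<^sub>1 \<le> a\<^sub>1\<close>).\<close>
lemma sign_pattern_step_first:
  assumes inv: "sign_pattern a b i C 0" and ne: "a (Suc i) \<noteq> b (Suc i)" and top: "b 1 \<le> a 1"
  defines "C' \<equiv> if b (Suc i) < a (Suc i) then {} else {b (Suc i)}"
  shows "sign_pattern a b (Suc i) C' (Suc i)"
proof -
  have eq: "\<forall>l\<in>{1..i}. a l = b l" using inv by (simp add: sign_pattern_def)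
  have count: "card {l\<in>{1..Suc i}. a l \<noteq> b l} = 1"
    using eq ne card_diff_indices_Suc[of i a b] by simp
  have top': "b (Suc i) < a (Suc i) \<or> \<not> b 1 < a 1" using eq ne top by (cases i) auto
  have sub: "C' \<subseteq> (\<lambda>l. max (a l) (b l)) ` {1..Suc i}"
  proof (cases "b (Suc i) < a (Suc i)")
    case False
    then have "b (Suc i) = max (a (Suc i)) (b (Suc i))" by simp
    moreover have "Suc i \<in> {1..Suc i}" by simp
    ultimately have "b (Suc i) \<in> (\<lambda>l. max (a l) (b l)) ` {1..Suc i}" by (rule image_eqI)
    then show ?thesis using False by (simp only: C'_def if_False empty_subsetI insert_subset)
  qed (simp add: C'_def)
  have parity: "b (Suc i) < a (Suc i) \<longleftrightarrow> even (card C')" and nodes: "\<forall>c\<in>C'. max (a (Suc i)) (b (Suc i)) \<le> c"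
    by (auto simp: C'_def)
  have "balance a b i t = 0" for t
    using eq unfolding balance_def by (intro sum.neutral) (simp add: step_diff_eq_0)
  moreover have "step_diff (a (Suc i)) (b (Suc i)) t * poly (node_poly C') t \<ge> 0" for t
    by (rule step_diff_node_sign) (use ne parity nodes in \<open>simp_all add: C'_def\<close>)
  ultimately have sign: "balance a b (Suc i) t * poly (node_poly C') t \<ge> 0" for t
    by (simp add: balance_Suc)
  have "card C' + (if 0 < Suc i \<and> b 1 < a 1 then 1 else 0) \<le> card {l\<in>{1..Suc i}. a l \<noteq> b l}"
    using count top' by (auto simp: C'_def)
  moreover have "finite C'" by (simp add: C'_def)
  ultimately show ?thesis
    unfolding sign_pattern_def using sub sign ne nodes parity by auto
qed

lemma sign_pattern_below_last:
  assumes inv: "sign_pattern a b i C p" and p: "0 < p"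
    and mono: "antimono_on {1..Suc i} a" "antimono_on {1..Suc i} b"
  shows "a (Suc i) \<le> a p" "b (Suc i) \<le> b p"
    and "card C + (if b 1 < a 1 then 1 else 0) \<le> card {l\<in>{1..i}. a l \<noteq> b l}"
proof -
  have "p \<in> {1..Suc i}" "Suc i \<in> {1..Suc i}" "p \<le> Suc i" using inv p by (auto simp: sign_pattern_def)
  then show "a (Suc i) \<le> a p" "b (Suc i) \<le> b p"
    using monotone_onD[OF mono(1)] monotone_onD[OF mono(2)] by blast+
  show "card C + (if b 1 < a 1 then 1 else 0) \<le> card {l\<in>{1..i}. a l \<noteq> b l}"
    using inv p by (auto simp: sign_pattern_def)
qed

lemma sign_pattern_step_same:
  assumes inv: "sign_pattern a b i C p" and p: "0 < p"
    and mono: "antimono_on {1..Suc i} a" "antimono_on {1..Suc i} b"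
    and ne: "a (Suc i) \<noteq> b (Suc i)" and same: "b (Suc i) < a (Suc i) \<longleftrightarrow> b p < a p"
  shows "sign_pattern a b (Suc i) C (Suc i)"
proof -
  note below = sign_pattern_below_last[OF inv p mono]
  have fin: "finite C" and nodes: "\<forall>c\<in>C. max (a p) (b p) \<le> c"
    and parity: "b p < a p \<longleftrightarrow> even (card C)"
    and sign: "\<forall>t. balance a b i t * poly (node_poly C) t \<ge> 0"
    using inv p by (auto simp: sign_pattern_def)
  have nodes': "\<forall>c\<in>C. max (a (Suc i)) (b (Suc i)) \<le> c" using nodes below by force
  have "step_diff (a (Suc i)) (b (Suc i)) t * poly (node_poly C) t \<ge> 0" for t
    using fin nodes' ne same parity by (intro step_diff_node_sign) auto
  then have "balance a b (Suc i) t * poly (node_poly C) t \<ge> 0" for t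
    using sign by (simp add: balance_Suc distrib_right)
  moreover have "C \<subseteq> (\<lambda>l. max (a l) (b l)) ` {1..Suc i}"
    using inv by (force simp: sign_pattern_def)
  moreover have "card C + (if 0 < Suc i \<and> b 1 < a 1 then 1 else 0) \<le> card {l\<in>{1..Suc i}. a l \<noteq> b l}"
    using below(3) ne card_diff_indices_Suc[of i a b] by simp
  ultimately show ?thesis
    unfolding sign_pattern_def using fin ne nodes' same parity by auto
qed

text \<open>The
  orientation change forces \<open>c \<le> min a\<^sub>p b\<^sub>p\<close>, so the new step sits below all old nodes, and the
  balance of the first \<open>i\<close> pairs vanishes below \<open>min a\<^sub>p b\<^sub>p\<close>.\<close>
lemma sign_pattern_step_change:
  assumes inv: "sign_pattern a b i C p" and p: "0 < p"
    and mono: "antimono_on {1..Suc i} a" "antimono_on {1..Suc i} b"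
    and ne: "a (Suc i) \<noteq> b (Suc i)" and change: "\<not> (b (Suc i) < a (Suc i) \<longleftrightarrow> b p < a p)"
  defines "c \<equiv> max (a (Suc i)) (b (Suc i))"
  shows "sign_pattern a b (Suc i) (insert c C) (Suc i)"
proof -
  note below = sign_pattern_below_last[OF inv p mono]
  have fin: "finite C" and nodes: "\<forall>c\<in>C. max (a p) (b p) \<le> c" and pi: "p \<le> i"
    and parity: "b p < a p \<longleftrightarrow> even (card C)" and neq_p: "a p \<noteq> b p"
    and rest: "\<forall>l\<in>{p<..i}. a l = b l"
    and sign: "\<forall>t. balance a b i t * poly (node_poly C) t \<ge> 0"
    using inv p by (auto simp: sign_pattern_def)
  have c_low: "c \<le> min (a p) (b p)"
    using below(1,2) ne change neq_p by (auto simp: c_def)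
  then have c_new: "\<forall>c'\<in>C. c < c'" using nodes neq_p by force
  then have c_notin: "c \<notin> C" by blast
  have mono_i: "antimono_on {1..i} a" "antimono_on {1..i} b"
    using mono by (auto intro: monotone_on_subset)
  have "balance a b (Suc i) t * poly (node_poly (insert c C)) t \<ge> 0" for t
  proof (cases "t \<le> min (a p) (b p)")
    case True
    then have "balance a b i t = 0"
      using balance_vanishes_below[OF mono_i _ pi rest] p by simp
    moreover have "step_diff (a (Suc i)) (b (Suc i)) t * poly (node_poly (insert c C)) t \<ge> 0"
      using fin c_new ne change parity c_notin
      by (intro step_diff_node_sign) (auto simp: c_def less_imp_le)
    ultimately show ?thesis by (simp add: balance_Suc)
  next
    case False
    then have "c < t" using c_low by (metis not_le order.strict_trans1)
    then have "step_diff (a (Suc i)) (b (Suc i)) t = 0" by (intro step_diff_eq_0) (simp add: c_def)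
    moreover have "balance a b i t * poly (node_poly C) t * (t - c) \<ge> 0"
      using sign \<open>c < t\<close> by simp
    ultimately show ?thesis
      using fin c_notin by (simp add: balance_Suc node_poly_insert mult_ac)
  qed
  moreover have "insert c C \<subseteq> (\<lambda>l. max (a l) (b l)) ` {1..Suc i}"
    using inv by (force simp: sign_pattern_def c_def)
  moreover have "card (insert c C) + (if 0 < Suc i \<and> b 1 < a 1 then 1 else 0)
      \<le> card {l\<in>{1..Suc i}. a l \<noteq> b l}"
    using below(3) ne fin c_notin card_diff_indices_Suc[of i a b] by simp
  moreover have "\<forall>c'\<in>insert c C. max (a (Suc i)) (b (Suc i)) \<le> c'"
    using c_new by (auto simp: c_def less_imp_le)
  moreover have "b (Suc i) < a (Suc i) \<longleftrightarrow> even (card (insert c C))"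
    using fin c_notin change parity by simp
  ultimately show ?thesis
    unfolding sign_pattern_def using fin ne by auto
qed

lemma sign_pattern_exists:
  assumes mono: "antimono_on {1..n} a" "antimono_on {1..n} b" and top: "b 1 \<le> a 1"
  shows "i \<le> n \<Longrightarrow> \<exists>C p. sign_pattern a b i C p"
proof (induction i)
  case 0
  show ?case by (rule exI[of _ "{}"], rule exI[of _ 0]) (simp add: sign_pattern_def)
next
  case (Suc i)
  then obtain C p where inv: "sign_pattern a b i C p" by auto
  have mono': "antimono_on {1..Suc i} a" "antimono_on {1..Suc i} b"
    using mono Suc.prems by (auto intro: monotone_on_subset)
  consider "a (Suc i) = b (Suc i)" | "a (Suc i) \<noteq> b (Suc i)" "p = 0"
    | "a (Suc i) \<noteq> b (Suc i)" "0 < p" by auto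
  then show ?case
  proof cases
    case 1
    then show ?thesis using sign_pattern_step_equal[OF inv] by blast
  next
    case 2
    then show ?thesis using sign_pattern_step_first[of a b i C] inv top by blast
  next
    case 3
    then show ?thesis
      using sign_pattern_step_same[OF inv _ mono'] sign_pattern_step_change[OF inv _ mono'] by blast
  qed
qed

lemma card_unequal_pairs:
  assumes "1 \<le> k"
  shows "card {l\<in>{1..k+1}. a l \<noteq> b l} + (if a 1 = b 1 then 1 else 0)
           + (if a (k+1) = b (k+1) then 1 else 0) \<le> k + 1"
proof -
  define E where "E = (if a 1 = b 1 then {1} else {}) \<union> (if a (k+1) = b (k+1) then {k+1} else {})"
  have card_E: "card E = (if a 1 = b 1 then 1 else 0) + (if a (k+1) = b (k+1) then 1 else 0)"
    using assms by (cases "a 1 = b 1"; cases "a (k+1) = b (k+1)") (auto simp: E_def)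
  have "{l\<in>{1..k+1}. a l \<noteq> b l} \<subseteq> {1..k+1} - E" by (auto simp: E_def)
  then have "card {l\<in>{1..k+1}. a l \<noteq> b l} \<le> card ({1..k+1} - E)" by (simp add: card_mono)
  also have "\<dots> = k + 1 - card E" using assms by (subst card_Diff_subset) (auto simp: E_def)
  finally show ?thesis using card_E assms by (auto split: if_splits)
qed

text \<open>The unequal pairs
  pay for the nodes; equality at an endpoint saves a node, and otherwise the end conditions
  \<open>a\<^sub>1 \<ge> b\<^sub>1\<close> and \<open>(-1)\<^sup>k a\<^sub>k\<^sub>+\<^sub>1 \<le> (-1)\<^sup>k b\<^sub>k\<^sub>+\<^sub>1\<close> fix the parity of the node count so it cannot be \<open>k\<close>.\<close>
lemma node_set_exists:
  fixes a b :: "nat \<Rightarrow> real" and k :: nat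
  assumes k: "1 \<le> k" and mono: "antimono_on {1..k+1} a" "antimono_on {1..k+1} b"
    and top: "b 1 \<le> a 1" and bottom: "(-1) ^ k * a (k+1) \<le> (-1) ^ k * b (k+1)"
  obtains C where "finite C" "C \<subseteq> (\<lambda>l. max (a l) (b l)) ` {1..k+1}" "card C \<le> k - 1"
    "\<And>t. balance a b (k+1) t * poly (node_poly C) t \<ge> 0"
proof -
  obtain C p where inv: "sign_pattern a b (k+1) C p"
    using sign_pattern_exists[OF mono top] by blast
  have "card C + (if b 1 < a 1 then 1 else 0) \<le> card {l\<in>{1..k+1}. a l \<noteq> b l}"
    using inv by (simp add: sign_pattern_def)
  then have budget: "card C + (if a (k+1) = b (k+1) then 1 else 0) \<le> k"
    using card_unequal_pairs[OF k, of a b] top by (auto split: if_splits)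
  have "card C \<le> k - 1"
  proof (cases "a (k+1) = b (k+1)")
    case True
    then show ?thesis using budget by simp
  next
    case False
    then have "p \<noteq> 0" using inv by (auto simp: sign_pattern_def)
    moreover have "\<not> p < k + 1" using inv False by (auto simp: sign_pattern_def)
    ultimately have "b (k+1) < a (k+1) \<longleftrightarrow> even (card C)"
      using inv by (auto simp: sign_pattern_def)
    then have "card C \<noteq> k" using bottom False by (cases "even k") auto
    then show ?thesis using budget by simp
  qed
  then show ?thesis using that inv by (auto simp: sign_pattern_def)
qed

lemma antimono_on_from_Suc:
  fixes a :: "nat \<Rightarrow> 'a::order"
  assumes "\<forall>i\<in>{m..<n}. a (Suc i) \<le> a i"
  shows "antimono_on {m..n} a"
proof (rule monotone_onI)
  fix i j assume i: "i \<in> {m..n}" and j: "j \<in> {m..n}" and "i \<le> j"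
  from \<open>i \<le> j\<close> j show "a j \<le> a i"
  proof (induction j rule: dec_induct)
    case (step j)
    then have "a (Suc j) \<le> a j" using assms i by simp
    also have "a j \<le> a i" using step i by simp
    finally show ?case .
  qed simp
qed

lemma same_sign_product:
  fixes x y w :: real
  assumes "0 \<le> x * w" "0 \<le> y * w" "w \<noteq> 0"
  shows "0 \<le> x * y"
proof -
  have "0 \<le> (x * w) * (y * w)" using assms by simp
  also have "\<dots> = (x * y) * w\<^sup>2" by (simp add: power2_eq_square mult_ac)
  finally show ?thesis using assms(3) by (simp add: zero_le_mult_iff)
qed

text \<open>Main case, \<open>k - 1\<close> nodes: with \<open>q\<close> interpolating \<open>f'\<close> on \<open>C\<close> we have
  \<open>\<Sum> f(a\<^sub>l) - f(b\<^sub>l) = \<integral> f' \<cdot> balance = \<integral> (f' - q) \<cdot> balance\<close> by the vanishing moments, and the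
  integrand is nonnegative off \<open>C\<close> because both factors have the sign of \<open>\<omega>\<^sub>C\<close>.\<close>
lemma sum_diff_nonneg_full_nodes:
  fixes D :: "nat \<Rightarrow> real \<Rightarrow> real" and a b :: "nat \<Rightarrow> real"
  assumes der: "\<forall>m<k. \<forall>x\<in>{lo..hi}. (D m has_real_derivative D (Suc m) x) (at x within {lo..hi})"
    and pos: "\<forall>x\<in>{lo..hi}. D k x \<ge> 0" and k: "1 \<le> k"
    and C: "finite C" "C \<subseteq> {lo..hi}" "card C = k - 1"
    and sign: "\<And>t. balance a b n t * poly (node_poly C) t \<ge> 0"
    and power_sums: "\<forall>j\<in>{1..<k}. (\<Sum>i=1..n. a i ^ j) = (\<Sum>i=1..n. b i ^ j)"
    and ina: "\<forall>l\<in>{1..n}. a l \<in> {lo..hi}" and inb: "\<forall>l\<in>{1..n}. b l \<in> {lo..hi}"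
  shows "(\<Sum>l=1..n. D 0 (a l) - D 0 (b l)) \<ge> 0"
proof -
  let ?S = "\<Sum>l=1..n. D 0 (a l) - D 0 (b l)"
  have der': "\<forall>m<k-1. \<forall>x\<in>{lo..hi}.
      ((\<lambda>j. D (Suc j)) m has_real_derivative (\<lambda>j. D (Suc j)) (Suc m) x) (at x within {lo..hi})"
    and pos': "\<forall>x\<in>{lo..hi}. (\<lambda>j. D (Suc j)) (k - 1) x \<ge> 0"
    using der pos k by simp_all
  obtain q where q: "\<forall>j. coeff q j \<noteq> 0 \<longrightarrow> j < k - 1" "\<forall>c\<in>C. poly q c = D 1 c"
    using interpolating_poly[OF C(1), of "D 1"] C(3) by auto
  have "((\<lambda>t. D 1 t * balance a b n t) has_integral ?S) {lo..hi}"
    using der k by (intro has_integral_balance ina inb) auto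
  moreover have "((\<lambda>t. poly q t * balance a b n t) has_integral 0) {lo..hi}"
    using q(1) by (intro has_integral_poly_balance[OF power_sums _ ina inb]) auto
  ultimately have "((\<lambda>t. D 1 t * balance a b n t - poly q t * balance a b n t)
      has_integral ?S - 0) {lo..hi}"
    by (rule has_integral_diff)
  then have "((\<lambda>t. (D 1 t - poly q t) * balance a b n t) has_integral ?S) {lo..hi}"
    by (simp add: left_diff_distrib)
  then have int: "((\<lambda>t. if t \<in> C then 0 else (D 1 t - poly q t) * balance a b n t)
      has_integral ?S) {lo..hi}"
    by (rule has_integral_spike_finite[OF C(1), rotated]) simp
  show ?thesis
  proof (rule has_integral_nonneg[OF int])
    fix t assume t: "t \<in> {lo..hi}"
    have "((\<lambda>j. D (Suc j)) 0 t - poly q t) * poly (node_poly C) t \<ge> 0"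
      by (rule interpolation_remainder_sign[OF der' pos' C]) (use q t in simp_all)
    then have "(D 1 t - poly q t) * poly (node_poly C) t \<ge> 0" by simp
    moreover have "t \<notin> C \<Longrightarrow> poly (node_poly C) t \<noteq> 0" using C(1) by (simp add: node_poly_eq_0_iff)
    ultimately show "0 \<le> (if t \<in> C then 0 else (D 1 t - poly q t) * balance a b n t)"
      using same_sign_product[OF _ sign[of t]] by auto
  qed
qed

text \<open>Degenerate case, fewer than \<open>k - 1\<close> nodes: then \<open>\<omega>\<^sub>C\<close> itself is orthogonal to the balance,
  so the nonnegative function \<open>\<omega>\<^sub>C \<cdot> balance\<close> vanishes almost everywhere, hence so does the
  balance, and both sides of the inequality agree.\<close>
lemma sum_diff_zero_few_nodes:
  fixes D :: "nat \<Rightarrow> real \<Rightarrow> real" and a b :: "nat \<Rightarrow> real"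
  assumes der: "\<forall>x\<in>{lo..hi}. (D 0 has_real_derivative D 1 x) (at x within {lo..hi})"
    and C: "finite C" "card C + 1 < k"
    and sign: "\<And>t. balance a b n t * poly (node_poly C) t \<ge> 0"
    and power_sums: "\<forall>j\<in>{1..<k}. (\<Sum>i=1..n. a i ^ j) = (\<Sum>i=1..n. b i ^ j)"
    and ina: "\<forall>l\<in>{1..n}. a l \<in> {lo..hi}" and inb: "\<forall>l\<in>{1..n}. b l \<in> {lo..hi}"
  shows "(\<Sum>l=1..n. D 0 (a l) - D 0 (b l)) = 0"
proof -
  have "coeff (node_poly C) j \<noteq> 0 \<Longrightarrow> j + 1 < k" for j
    using le_degree[of "node_poly C" j] C by (simp add: degree_node_poly)
  then have "((\<lambda>t. poly (node_poly C) t * balance a b n t) has_integral 0) {lo..hi}"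
    by (intro has_integral_poly_balance[OF power_sums _ ina inb]) blast
  then have "negligible {t\<in>{lo..hi}. poly (node_poly C) t * balance a b n t \<noteq> 0}"
    by (rule nonneg_has_integral_0_negligible) (use sign in \<open>simp add: mult.commute\<close>)
  then have N: "negligible ({t\<in>{lo..hi}. poly (node_poly C) t * balance a b n t \<noteq> 0} \<union> C)"
    using C(1) by (simp add: negligible_finite)
  have "((\<lambda>t. D 1 t * balance a b n t) has_integral 0) {lo..hi}"
    by (rule has_integral_spike[OF N _ has_integral_0]) (use C(1) in \<open>auto simp: node_poly_eq_0_iff\<close>)
  moreover have "((\<lambda>t. D 1 t * balance a b n t) has_integral (\<Sum>l=1..n. D 0 (a l) - D 0 (b l))) {lo..hi}"
    by (rule has_integral_balance[OF der ina inb])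
  ultimately show ?thesis by (rule has_integral_unique[symmetric])
qed

theorem mainTheorem7:
  fixes k :: nat and lo hi :: real and a b :: "nat \<Rightarrow> real"
    and f :: "real \<Rightarrow> real" and D :: "nat \<Rightarrow> real \<Rightarrow> real"
  assumes "k \<ge> 1"
    and "\<forall>i\<in>{1..k}. a (i + 1) \<le> a i"
    and "\<forall>i\<in>{1..k}. b (i + 1) \<le> b i"
    and "\<forall>i\<in>{1..k+1}. a i \<in> {lo..hi}"
    and "\<forall>i\<in>{1..k+1}. b i \<in> {lo..hi}"
    and "a 1 \<ge> b 1"
    and "(-1) ^ k * a (k + 1) \<le> (-1) ^ k * b (k + 1)"
    and "\<forall>j\<in>{1..<k}. (\<Sum>i=1..k+1. a i ^ j) = (\<Sum>i=1..k+1. b i ^ j)"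
    and "D 0 = f"
    and "k_times_differentiable_on k D {lo..hi}"
    and "\<forall>x\<in>{lo..hi}. D k x \<ge> 0"
  shows "(\<Sum>i=1..k+1. f (a i)) \<ge> (\<Sum>i=1..k+1. f (b i))"
proof -
  have der: "\<forall>m<k. \<forall>x\<in>{lo..hi}. (D m has_real_derivative D (Suc m) x) (at x within {lo..hi})"
    using assms(10) by (simp add: k_times_differentiable_on_def)
  have "antimono_on {1..k+1} a" "antimono_on {1..k+1} b"
    using assms(2,3) by (auto intro!: antimono_on_from_Suc)
  then obtain C where C: "finite C" "C \<subseteq> (\<lambda>l. max (a l) (b l)) ` {1..k+1}" "card C \<le> k - 1"
    and sign: "\<And>t. balance a b (k+1) t * poly (node_poly C) t \<ge> 0"
    using node_set_exists assms(1,6,7) by blast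
  have "C \<subseteq> {lo..hi}" using C(2) assms(4,5) by (force simp: max_def)
  have "(\<Sum>l=1..k+1. D 0 (a l) - D 0 (b l)) \<ge> 0"
  proof (cases "card C = k - 1")
    case True
    show ?thesis
      using sum_diff_nonneg_full_nodes[OF der assms(11,1) C(1) \<open>C \<subseteq> {lo..hi}\<close> True sign
          assms(8,4,5)] .
  next
    case False
    then have "card C + 1 < k" using C(3) by simp
    then show ?thesis
      using sum_diff_zero_few_nodes[OF _ C(1) _ sign assms(8,4,5)] der assms(1) by simp
  qed
  then show ?thesis using assms(9) by (simp add: sum_subtractf)
qed

end
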